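(* For all integers $m\ge1$, $r\ge0$ and $n\ge0$, $$\mathcal D_{m,r}(n,x)=\frac1{n+1}\sum_{k=0}^n\sum_{l=0}^{n-k}\sum_{s=0}^l\binom{n+1}{l+1}\binom{l+1}{s+1}W_{m,r}(n-l,k)\,m^{l-s}\,T^{[m]}_{s+1}(1)\,\mathcal B_{l-s}\,\mathcal B_k(x).$$
   Context: The Bernoulli polynomials are defined by $\sum_{n\ge0}\mathcal B_n(x)\frac{t^n}{n!}=\frac{te^{xt}}{e^t-1}$ and $\mathcal B_n:=\mathcal B_n(0)$. For integers $m\ge1$, $n,k,r\ge0$, $W_{m,r}(n,k)$ denotes the $r$-Whitney number of the second kind, defined by $\sum_{n\ge k}W_{m,r}(n,k)\frac{z^n}{n!}=\frac{e^{rz}}{k!}\left(\frac{e^{mz}-1}{m}\right)^k$; the $r$-Dowling polynomial is $\mathcal D_{m,r}(n,u):=\sum_{k=0}^nW_{m,r}(n,k)u^k$; and the $[m]$-Touchard polynomials are $T^{[m]}_n(x):=\sum_{k=0}^n W_{m,0}(n,k)x^k$. *)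

theory Defs
  imports "HOL-Analysis.Analysis" "HOL-Computational_Algebra.Formal_Power_Series"
begin

definition bernpoly :: "nat \<Rightarrow> real \<Rightarrow> real" where
  "bernpoly n x = fact n * fps_nth (fps_X * fps_exp x / (fps_exp 1 - 1)) n"

definition bernnum :: "nat \<Rightarrow> real" where
  "bernnum n = bernpoly n 0"

definition whitney2 :: "nat \<Rightarrow> nat \<Rightarrow> nat \<Rightarrow> nat \<Rightarrow> real" where
  "whitney2 m r n k = fact n * fps_nth
     (fps_exp (real r) * fps_const (1 / fact k) * ((fps_exp (real m) - 1) / fps_const (real m)) ^ k) n"

definition dowling :: "nat \<Rightarrow> nat \<Rightarrow> nat \<Rightarrow> real \<Rightarrow> real" where
  "dowling m r n u = (\<Sum>k=0..n. whitney2 m r n k * u ^ k)"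

definition touchard :: "nat \<Rightarrow> nat \<Rightarrow> real \<Rightarrow> real" where
  "touchard m n x = (\<Sum>k=0..n. whitney2 m 0 n k * x ^ k)"

end

theory Submission
  imports Defs
begin

unbundle no vec_syntax
unbundle fps_syntax

text \<open>
  Put U = (e^(mt) - 1)/m, so that the exponential generating function of D(n,x) is
  e^(rt) e^(xU).  With beta_x(t) = t e^(xt)/(e^t - 1) and H(t) = (e^t - 1)/t we have
  H beta_x = e^(xt), hence e^(rt) e^(xU) = e^(rt) H(U) beta_x(U), and expanding
  beta_x(U) = sum_k B_k(x) U^k/k! produces the Whitney numbers.  The Touchard values and
  the Bernoulli numbers come from the factor H(U): since beta_0(mt) U = t, we get
  t H(U) = (e^U - 1) beta_0(mt), whose coefficients are binomial convolutions of
  T_s(1) with m^j B_j.  The extra factor t accounts for the 1/(n+1).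
\<close>

lemma fps_mult_compose_nth:
  fixes f c u :: "'a::comm_ring_1 fps"
  assumes u0: "u $ 0 = 0"
  shows "(f * (c oo u)) $ n = (\<Sum>k=0..n. c $ k * (f * u ^ k) $ n)"
proof -
  have power_nth_below: "(u ^ k) $ j = 0" if "j < k" for j k
    using startsby_zero_power_prefix[OF u0] that by blast
  have "(f * (c oo u)) $ n = (\<Sum>i=0..n. f $ i * (\<Sum>k=0..n-i. c $ k * (u ^ k) $ (n-i)))"
    by (simp add: fps_mult_nth fps_compose_nth)
  also have "\<dots> = (\<Sum>i=0..n. f $ i * (\<Sum>k=0..n. c $ k * (u ^ k) $ (n-i)))"
    by (intro sum.cong refl arg_cong[where f="(*) _"] sum.mono_neutral_left)
       (auto simp: power_nth_below)
  also have "\<dots> = (\<Sum>k=0..n. \<Sum>i=0..n. c $ k * (f $ i * (u ^ k) $ (n-i)))"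
    by (subst sum.swap) (simp add: sum_distrib_left ac_simps)
  also have "\<dots> = (\<Sum>k=0..n. c $ k * (f * u ^ k) $ n)"
    by (simp add: fps_mult_nth sum_distrib_left)
  finally show ?thesis .
qed

lemma fact_mult_fps_mult_nth:
  fixes f g :: "'a::field_char_0 fps"
  shows "fact n * (f * g) $ n =
    (\<Sum>i=0..n. of_nat (n choose i) * (fact i * f $ i) * (fact (n - i) * g $ (n - i)))"
  unfolding fps_mult_nth sum_distrib_left
  by (intro sum.cong refl) (simp add: binomial_fact)

definition scaled_expm1 :: "nat \<Rightarrow> real fps" where
  "scaled_expm1 m = fps_const (inverse (real m)) * (fps_exp (real m) - 1)"

definition whitney_egf :: "nat \<Rightarrow> nat \<Rightarrow> nat \<Rightarrow> real fps" where
  "whitney_egf m r k = fps_const (1 / fact k) * (fps_exp (real r) * scaled_expm1 m ^ k)"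

lemma scaled_expm1_nth_0 [simp]: "scaled_expm1 m $ 0 = 0"
  by (simp add: scaled_expm1_def)

lemma whitney2_conv_whitney_egf: "whitney2 m r n k = fact n * whitney_egf m r k $ n"
  by (simp add: whitney2_def whitney_egf_def scaled_expm1_def ac_simps)

lemma whitney_egf_nth: "whitney_egf m r k $ n = (fps_exp (real r) * scaled_expm1 m ^ k) $ n / fact k"
  by (simp add: whitney_egf_def)

lemma whitney2_eq_0: "n < k \<Longrightarrow> whitney2 m r n k = 0"
  using startsby_zero_power_prefix[of "scaled_expm1 m" k]
  by (simp add: whitney2_conv_whitney_egf whitney_egf_def fps_mult_nth)

lemma dowling_conv_fps_nth:
  "dowling m r n x = fact n * (fps_exp (real r) * (fps_exp x oo scaled_expm1 m)) $ n"
  by (simp add: dowling_def fps_mult_compose_nth whitney2_conv_whitney_egf whitney_egf_nth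
      sum_distrib_left mult_ac)

lemma touchard_conv_fps_nth: "touchard m n x = fact n * (fps_exp x oo scaled_expm1 m) $ n"
  using dowling_conv_fps_nth[of m 0 n x] by (simp add: touchard_def dowling_def)

definition bernpoly_egf :: "real \<Rightarrow> real fps" where
  "bernpoly_egf x = fps_X * fps_exp x / (fps_exp 1 - 1)"

lemma bernpoly_conv_bernpoly_egf: "bernpoly k x = fact k * bernpoly_egf x $ k"
  by (simp add: bernpoly_def bernpoly_egf_def)

lemma bernpoly_egf_mult_expm1: "bernpoly_egf x * (fps_exp 1 - 1) = fps_X * fps_exp x"
proof -
  have expm1: "subdegree (fps_exp (1::real) - 1) = 1"
    by (rule subdegreeI) auto
  have "subdegree (fps_X * fps_exp x) = 1"
    by (rule subdegreeI) auto
  with expm1 show ?thesis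
    unfolding bernpoly_egf_def by (intro fps_times_divide_eq) auto
qed

definition expm1_over_X :: "real fps" where
  "expm1_over_X = fps_shift 1 (fps_exp 1 - 1)"

lemma fps_X_mult_expm1_over_X: "fps_X * expm1_over_X = fps_exp 1 - 1"
  by (rule fps_ext) (simp add: expm1_over_X_def fps_X_mult_nth)

lemma expm1_over_X_mult_bernpoly_egf: "expm1_over_X * bernpoly_egf x = fps_exp x"
proof -
  have "fps_X * (expm1_over_X * bernpoly_egf x) = bernpoly_egf x * (fps_X * expm1_over_X)"
    by (simp only: mult_ac)
  also have "\<dots> = fps_X * fps_exp x"
    by (simp add: fps_X_mult_expm1_over_X bernpoly_egf_mult_expm1)
  finally show ?thesis by simp
qed

abbreviation dilate :: "'a::comm_ring_1 \<Rightarrow> 'a fps \<Rightarrow> 'a fps" where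
  "dilate c f \<equiv> f oo (fps_const c * fps_X)"

lemma dilate_fps_exp:
  fixes c :: "'a::field_char_0"
  shows "dilate c (fps_exp 1) = fps_exp c"
  by (rule fps_ext) (simp add: power_divide)

lemma scaled_expm1_conv_dilate:
  "scaled_expm1 m = fps_const (inverse (real m)) * dilate (real m) (fps_exp 1 - 1)"
  by (simp add: scaled_expm1_def fps_compose_sub_distrib dilate_fps_exp)

lemma dilate_bernpoly_egf_mult_scaled_expm1:
  assumes "m \<ge> 1"
  shows "dilate (real m) (bernpoly_egf 0) * scaled_expm1 m = fps_X"
proof -
  have "dilate (real m) (bernpoly_egf 0) * scaled_expm1 m
      = fps_const (inverse (real m)) * dilate (real m) (bernpoly_egf 0 * (fps_exp 1 - 1))"
    by (simp add: scaled_expm1_conv_dilate fps_compose_mult_distrib)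
  also have "\<dots> = fps_const (inverse (real m)) * dilate (real m) fps_X"
    by (simp add: bernpoly_egf_mult_expm1)
  also have "\<dots> = fps_X"
    using assms by (intro fps_ext) (simp add: fps_X_nth)
  finally show ?thesis .
qed

lemma fact_mult_dilate_bernpoly_egf_nth:
  "fact j * dilate (real m) (bernpoly_egf 0) $ j = real m ^ j * bernnum j"
  by (simp add: bernnum_def bernpoly_conv_bernpoly_egf)

lemma fact_mult_touchard_egf_nth:
  "fact (Suc s) * ((fps_exp 1 - 1) oo scaled_expm1 m) $ Suc s = touchard m (Suc s) 1"
  by (simp add: touchard_conv_fps_nth fps_compose_sub_distrib)

definition touchard_bernoulli_fps :: "nat \<Rightarrow> real fps" where
  "touchard_bernoulli_fps m = ((fps_exp 1 - 1) oo scaled_expm1 m) * dilate (real m) (bernpoly_egf 0)"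

lemma touchard_bernoulli_fps_eq:
  assumes "m \<ge> 1"
  shows "touchard_bernoulli_fps m = fps_X * (expm1_over_X oo scaled_expm1 m)"
proof -
  have "(fps_exp 1 - 1) oo scaled_expm1 m = scaled_expm1 m * (expm1_over_X oo scaled_expm1 m)"
    by (simp add: fps_X_mult_expm1_over_X[symmetric] fps_compose_mult_distrib)
  then show ?thesis
    using dilate_bernpoly_egf_mult_scaled_expm1[OF assms]
    by (simp add: touchard_bernoulli_fps_def mult_ac)
qed

lemma touchard_bernoulli_fps_nth_0 [simp]: "touchard_bernoulli_fps m $ 0 = 0"
  by (simp add: touchard_bernoulli_fps_def)

lemma touchard_bernnum_convolution:
  "(\<Sum>s=0..l. real ((l+1) choose (s+1)) * real m ^ (l-s) * touchard m (s+1) 1 * bernnum (l-s))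
    = fact (l+1) * touchard_bernoulli_fps m $ (l+1)"
proof -
  let ?T = "(fps_exp 1 - 1) oo scaled_expm1 m" and ?B = "dilate (real m) (bernpoly_egf 0)"
  have "fact (Suc l) * touchard_bernoulli_fps m $ Suc l = (\<Sum>i=0..Suc l.
      real (Suc l choose i) * (fact i * ?T $ i) * (fact (Suc l - i) * ?B $ (Suc l - i)))"
    unfolding touchard_bernoulli_fps_def by (rule fact_mult_fps_mult_nth)
  also have "\<dots> = (\<Sum>s=0..l.
      real (Suc l choose Suc s) * (fact (Suc s) * ?T $ Suc s) * (fact (l - s) * ?B $ (l - s)))"
    by (subst sum.atLeast0_atMost_Suc_shift) simp
  also have "\<dots> = (\<Sum>s=0..l.
      real ((l+1) choose (s+1)) * real m ^ (l-s) * touchard m (s+1) 1 * bernnum (l-s))"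
    unfolding fact_mult_touchard_egf_nth fact_mult_dilate_bernpoly_egf_nth by (simp add: mult_ac)
  finally show ?thesis by simp
qed

lemma whitney_touchard_bernoulli_convolution:
  assumes "k \<le> n"
  shows "(\<Sum>l=0..n-k. real ((n+1) choose (l+1)) * whitney2 m r (n-l) k
            * (fact (l+1) * touchard_bernoulli_fps m $ (l+1)))
    = fact (n+1) * (touchard_bernoulli_fps m * whitney_egf m r k) $ (n+1)"
proof -
  let ?A = "touchard_bernoulli_fps m" and ?W = "whitney_egf m r k"
  have "fact (Suc n) * (?A * ?W) $ Suc n = (\<Sum>i=0..Suc n.
      real (Suc n choose i) * (fact i * ?A $ i) * (fact (Suc n - i) * ?W $ (Suc n - i)))"
    by (rule fact_mult_fps_mult_nth)
  also have "\<dots> = (\<Sum>l=0..n.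
      real (Suc n choose Suc l) * (fact (Suc l) * ?A $ Suc l) * whitney2 m r (n - l) k)"
    by (subst sum.atLeast0_atMost_Suc_shift) (simp add: whitney2_conv_whitney_egf)
  also have "\<dots> = (\<Sum>l=0..n-k.
      real (Suc n choose Suc l) * (fact (Suc l) * ?A $ Suc l) * whitney2 m r (n - l) k)"
    by (rule sum.mono_neutral_right) (auto simp: whitney2_eq_0)
  finally show ?thesis by (simp add: mult_ac)
qed

lemma dowling_summand:
  assumes "m \<ge> 1" and "k \<le> n"
  shows "(\<Sum>l=0..n-k. \<Sum>s=0..l.
        real ((n+1) choose (l+1)) * real ((l+1) choose (s+1)) * whitney2 m r (n-l) k
        * real m ^ (l-s) * touchard m (s+1) 1 * bernnum (l-s) * bernpoly k x)
    = (real n + 1) * fact n * (bernpoly_egf x $ k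
        * ((expm1_over_X oo scaled_expm1 m) * fps_exp (real r) * scaled_expm1 m ^ k) $ n)"
proof -
  let ?F = "(expm1_over_X oo scaled_expm1 m) * fps_exp (real r)"
  have "(\<Sum>l=0..n-k. \<Sum>s=0..l.
        real ((n+1) choose (l+1)) * real ((l+1) choose (s+1)) * whitney2 m r (n-l) k
        * real m ^ (l-s) * touchard m (s+1) 1 * bernnum (l-s) * bernpoly k x)
      = bernpoly k x * (\<Sum>l=0..n-k. real ((n+1) choose (l+1)) * whitney2 m r (n-l) k *
          (\<Sum>s=0..l. real ((l+1) choose (s+1)) * real m ^ (l-s)
             * touchard m (s+1) 1 * bernnum (l-s)))"
    by (simp add: sum_distrib_left mult_ac)
  also have "\<dots> = bernpoly k x * (fact (n+1)
      * (touchard_bernoulli_fps m * whitney_egf m r k) $ (n+1))"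
    by (simp only: touchard_bernnum_convolution whitney_touchard_bernoulli_convolution[OF assms(2)])
  also have "touchard_bernoulli_fps m * whitney_egf m r k
      = fps_X * (fps_const (1 / fact k) * (?F * scaled_expm1 m ^ k))"
    by (simp add: touchard_bernoulli_fps_eq[OF assms(1)] whitney_egf_def mult_ac)
  finally show ?thesis by (simp add: bernpoly_conv_bernpoly_egf)
qed

theorem mainTheorem16:
  fixes m r n :: nat and x :: real
  assumes "m \<ge> 1"
  shows "dowling m r n x =
    1 / (real n + 1) *
    (\<Sum>k=0..n. \<Sum>l=0..n-k. \<Sum>s=0..l.
        real ((n+1) choose (l+1)) * real ((l+1) choose (s+1)) * whitney2 m r (n-l) k
        * real m ^ (l-s) * touchard m (s+1) 1 * bernnum (l-s) * bernpoly k x)"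
proof -
  let ?U = "scaled_expm1 m" and ?E = "fps_exp (real r)"
  let ?F = "(expm1_over_X oo ?U) * ?E"
  have "1 / (real n + 1) *
    (\<Sum>k=0..n. \<Sum>l=0..n-k. \<Sum>s=0..l.
        real ((n+1) choose (l+1)) * real ((l+1) choose (s+1)) * whitney2 m r (n-l) k
        * real m ^ (l-s) * touchard m (s+1) 1 * bernnum (l-s) * bernpoly k x)
      = 1 / (real n + 1) *
        (\<Sum>k=0..n. (real n + 1) * fact n * (bernpoly_egf x $ k * (?F * ?U ^ k) $ n))"
    by (intro arg_cong[where f="(*) _"] sum.cong refl dowling_summand[OF assms]) simp
  also have "\<dots> = fact n * (\<Sum>k=0..n. bernpoly_egf x $ k * (?F * ?U ^ k) $ n)"
    by (simp add: sum_distrib_left[symmetric])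
  also have "(\<Sum>k=0..n. bernpoly_egf x $ k * (?F * ?U ^ k) $ n) = (?F * (bernpoly_egf x oo ?U)) $ n"
    by (simp add: fps_mult_compose_nth)
  also have "?F * (bernpoly_egf x oo ?U) = ?E * ((expm1_over_X * bernpoly_egf x) oo ?U)"
    by (simp add: fps_compose_mult_distrib mult_ac)
  finally show ?thesis
    by (simp add: expm1_over_X_mult_bernpoly_egf dowling_conv_fps_nth)
qed

end
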